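(* Let $K\ge2$, $\eta>0$, and let $\mathbf r\in\mathbb R^K$ be a mean reward vector with no ties, i.e. $r(a)\ne r(a')$ whenever $a\ne a'$; let $a^*=\arg\max_a r(a)$. For $\boldsymbol\theta\in\mathbb R^K$ let $\pi_{\boldsymbol\theta}$ be the softmax policy $\pi_{\boldsymbol\theta}(a)=e^{\theta(a)}/\sum_b e^{\theta(b)}$ and $\Phi_\eta(\boldsymbol\theta)=\pi_{\boldsymbol\theta}^\top\mathbf r+\frac1\eta\sum_a\log\pi_{\boldsymbol\theta}(a)$. Then for all $\boldsymbol\theta\in\mathbb R^K$, $$\|\nabla_{\boldsymbol\theta}\Phi_\eta(\boldsymbol\theta)\|_2\ge\Big(\pi_{\boldsymbol\theta}(a^* )\big(r(a^* )-\pi_{\boldsymbol\theta}^\top\mathbf r\big)-\frac K\eta\Big)^+ ,$$ where $(x)^+=\max\{0,x\}$.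
   Context: Setting: $K$-armed bandit with mean rewards $\mathbf r$; $\Phi_\eta$ is the log-barrier regularized objective. *)

theory Defs
  imports "HOL-Analysis.Analysis"
begin

definition softmax :: "real^'n \<Rightarrow> 'n \<Rightarrow> real" where
  "softmax \<theta> a = exp (\<theta> $ a) / (\<Sum>b\<in>UNIV. exp (\<theta> $ b))"

definition exp_reward :: "real^'n \<Rightarrow> real^'n \<Rightarrow> real" where
  "exp_reward r \<theta> = (\<Sum>a\<in>UNIV. softmax \<theta> a * r $ a)"

definition Phi :: "real \<Rightarrow> real^'n \<Rightarrow> real^'n \<Rightarrow> real" where
  "Phi \<eta> r \<theta> = exp_reward r \<theta> + (1 / \<eta>) * (\<Sum>a\<in>UNIV. ln (softmax \<theta> a))"

end

theory Submission
  imports Defs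
begin

text \<open>
  Writing \<open>\<pi>\<close> for the softmax policy, the gradient of \<open>\<Phi>\<^sub>\<eta>\<close> has coordinates
  \<open>\<pi>(a) (r(a) - \<pi>\<^sup>T r) + (1 - K \<pi>(a)) / \<eta>\<close>. The Euclidean norm dominates the absolute
  value of the coordinate at \<open>a\<^sup>*\<close>, and \<open>1 - K \<pi>(a\<^sup>*) \<ge> -K\<close> because \<open>\<pi>(a\<^sup>*) \<le> 1\<close>.
\<close>

definition log_sum_exp :: "real^'n \<Rightarrow> real" where
  "log_sum_exp \<theta> = ln (\<Sum>b\<in>UNIV. exp (\<theta> $ b))"

definition Phi_gradient :: "real \<Rightarrow> real^'n \<Rightarrow> real^'n \<Rightarrow> real^'n" where
  "Phi_gradient \<eta> r \<theta> =
     (\<chi> a. softmax \<theta> a * (r $ a - exp_reward r \<theta>) + (1 - real CARD('n) * softmax \<theta> a) / \<eta>)"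

lemma sum_exp_pos: "(\<Sum>b\<in>UNIV. exp (\<theta> $ b)) > (0::real)"
  by (rule sum_pos) auto

lemma softmax_pos: "softmax \<theta> a > 0"
  unfolding softmax_def by (intro divide_pos_pos exp_gt_zero sum_exp_pos)

lemma softmax_le_one: "softmax \<theta> a \<le> 1"
proof -
  have "exp (\<theta> $ a) \<le> (\<Sum>b\<in>UNIV. exp (\<theta> $ b))"
    by (rule member_le_sum) auto
  then show ?thesis
    using sum_exp_pos[of \<theta>] by (simp add: softmax_def)
qed

lemma ln_softmax: "ln (softmax \<theta> a) = \<theta> $ a - log_sum_exp \<theta>"
  using sum_exp_pos[of \<theta>] by (simp add: softmax_def log_sum_exp_def ln_div)

lemma softmax_eq_exp: "softmax \<theta> a = exp (\<theta> $ a - log_sum_exp \<theta>)"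
  using softmax_pos[of \<theta> a] by (simp flip: ln_softmax)

lemma sum_centered_product_swap:
  fixes p h r :: "'a \<Rightarrow> real"
  shows "(\<Sum>a\<in>A. p a * (h a - (\<Sum>b\<in>A. p b * h b)) * r a)
       = (\<Sum>a\<in>A. p a * (r a - (\<Sum>b\<in>A. p b * r b)) * h a)"
proof -
  have centered: "(\<Sum>a\<in>A. p a * (f a - c) * g a) = (\<Sum>a\<in>A. p a * f a * g a) - c * (\<Sum>a\<in>A. p a * g a)"
    for f g :: "'a \<Rightarrow> real" and c
    by (simp add: algebra_simps sum_subtractf sum_distrib_left)
  show ?thesis
    unfolding centered by (simp add: algebra_simps)
qed

lemma has_derivative_vec_nth: "((\<lambda>t. t $ a) has_derivative (\<lambda>h. h $ a)) F"
  by (rule bounded_linear.has_derivative[OF bounded_linear_vec_nth]) simp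

lemma has_derivative_log_sum_exp:
  fixes \<theta> :: "real^'n"
  shows "(log_sum_exp has_derivative (\<lambda>h. \<Sum>b\<in>UNIV. softmax \<theta> b * h $ b)) (at \<theta>)"
proof -
  have sum_exp: "((\<lambda>t. \<Sum>b\<in>UNIV. exp (t $ b)) has_derivative
      (\<lambda>h. \<Sum>b\<in>UNIV. h $ b * exp (\<theta> $ b))) (at \<theta>)"
    by (intro has_derivative_sum has_derivative_exp has_derivative_vec_nth)
  have "(log_sum_exp has_derivative
      (\<lambda>h. (\<Sum>b\<in>UNIV. h $ b * exp (\<theta> $ b)) * inverse (\<Sum>b\<in>UNIV. exp (\<theta> $ b)))) (at \<theta>)"
    unfolding log_sum_exp_def by (rule has_derivative_ln[OF sum_exp_pos sum_exp])
  then show ?thesis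
    by (simp add: softmax_def sum_divide_distrib field_simps)
qed

lemma has_derivative_softmax:
  fixes \<theta> :: "real^'n"
  shows "((\<lambda>t. softmax t a) has_derivative
     (\<lambda>h. softmax \<theta> a * (h $ a - (\<Sum>b\<in>UNIV. softmax \<theta> b * h $ b)))) (at \<theta>)"
proof -
  have "((\<lambda>t. exp (t $ a - log_sum_exp t)) has_derivative
      (\<lambda>h. (h $ a - (\<Sum>b\<in>UNIV. softmax \<theta> b * h $ b)) * exp (\<theta> $ a - log_sum_exp \<theta>))) (at \<theta>)"
    by (intro has_derivative_exp has_derivative_diff has_derivative_vec_nth has_derivative_log_sum_exp)
  then show ?thesis
    by (simp only: softmax_eq_exp[of _ a] mult.commute)
qed

lemma has_derivative_exp_reward:
  fixes \<theta> :: "real^'n"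
  shows "(exp_reward r has_derivative
     (\<lambda>h. \<Sum>a\<in>UNIV. softmax \<theta> a * (r $ a - exp_reward r \<theta>) * h $ a)) (at \<theta>)"
proof -
  have "(exp_reward r has_derivative
      (\<lambda>h. \<Sum>a\<in>UNIV. softmax \<theta> a * (h $ a - (\<Sum>b\<in>UNIV. softmax \<theta> b * h $ b)) * r $ a)) (at \<theta>)"
    unfolding exp_reward_def[abs_def]
    by (intro has_derivative_sum has_derivative_mult_left has_derivative_softmax)
  then show ?thesis
    unfolding exp_reward_def[of r \<theta>] by (subst (asm) sum_centered_product_swap)
qed

lemma Phi_eq_log_sum_exp:
  fixes \<theta> :: "real^'n"
  shows "Phi \<eta> r \<theta> = exp_reward r \<theta> + (1 / \<eta>) * ((\<Sum>a\<in>UNIV. \<theta> $ a) - real CARD('n) * log_sum_exp \<theta>)"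
  by (simp add: Phi_def ln_softmax sum_subtractf)

lemma inner_Phi_gradient:
  fixes \<theta> :: "real^'n"
  shows "Phi_gradient \<eta> r \<theta> \<bullet> h
      = (\<Sum>a\<in>UNIV. softmax \<theta> a * (r $ a - exp_reward r \<theta>) * h $ a)
        + (1 / \<eta>) * ((\<Sum>a\<in>UNIV. h $ a) - real CARD('n) * (\<Sum>b\<in>UNIV. softmax \<theta> b * h $ b))"
proof -
  have "Phi_gradient \<eta> r \<theta> \<bullet> h = (\<Sum>a\<in>UNIV. softmax \<theta> a * (r $ a - exp_reward r \<theta>) * h $ a
      + (h $ a - real CARD('n) * (softmax \<theta> a * h $ a)) / \<eta>)"
    unfolding Phi_gradient_def inner_vec_def
    by (intro sum.cong) (simp_all add: algebra_simps diff_divide_distrib)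
  also have "\<dots> = (\<Sum>a\<in>UNIV. softmax \<theta> a * (r $ a - exp_reward r \<theta>) * h $ a)
      + (1 / \<eta>) * ((\<Sum>a\<in>UNIV. h $ a) - real CARD('n) * (\<Sum>b\<in>UNIV. softmax \<theta> b * h $ b))"
    by (simp only: sum.distrib flip: sum_divide_distrib) (simp add: sum_subtractf sum_distrib_left)
  finally show ?thesis .
qed

lemma gderiv_Phi:
  fixes \<theta> :: "real^'n"
  shows "GDERIV (Phi \<eta> r) \<theta> :> Phi_gradient \<eta> r \<theta>"
  unfolding gderiv_def inner_commute[of _ "Phi_gradient \<eta> r \<theta>"] inner_Phi_gradient
    Phi_eq_log_sum_exp[abs_def]
  by (intro has_derivative_add has_derivative_mult_right has_derivative_diff has_derivative_sum
      has_derivative_exp_reward has_derivative_log_sum_exp has_derivative_vec_nth)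

lemma Phi_gradient_component_ge:
  fixes \<theta> :: "real^'n"
  assumes "\<eta> > 0"
  shows "Phi_gradient \<eta> r \<theta> $ a \<ge> softmax \<theta> a * (r $ a - exp_reward r \<theta>) - real CARD('n) / \<eta>"
proof -
  have "real CARD('n) * softmax \<theta> a \<le> real CARD('n)"
    by (rule mult_left_le[OF softmax_le_one]) simp
  then have "1 - real CARD('n) * softmax \<theta> a \<ge> - real CARD('n)"
    by linarith
  then have "(1 - real CARD('n) * softmax \<theta> a) / \<eta> \<ge> - real CARD('n) / \<eta>"
    using divide_right_mono[OF _ less_imp_le[OF assms]] by fastforce
  then show ?thesis
    by (simp add: Phi_gradient_def)
qed

text \<open>The bound holds at every action.\<close>

theorem lemma4p2:
  fixes r :: "real^'n" and \<eta> :: real and astar :: 'n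
  assumes "CARD('n) \<ge> 2"
    and "\<eta> > 0"
    and "\<And>a a'. a \<noteq> a' \<Longrightarrow> r $ a \<noteq> r $ a'"
    and "\<And>a. r $ a \<le> r $ astar"
  shows "\<forall>\<theta>::real^'n. \<exists>D. (GDERIV (Phi \<eta> r) \<theta> :> D) \<and>
           norm D \<ge> max 0 (softmax \<theta> astar * (r $ astar - exp_reward r \<theta>)
                            - real CARD('n) / \<eta>)"
proof
  fix \<theta> :: "real^'n"
  have "softmax \<theta> astar * (r $ astar - exp_reward r \<theta>) - real CARD('n) / \<eta>
      \<le> Phi_gradient \<eta> r \<theta> $ astar"
    using \<open>\<eta> > 0\<close> by (rule Phi_gradient_component_ge)
  also have "\<dots> \<le> norm (Phi_gradient \<eta> r \<theta>)"
    using component_le_norm_cart abs_le_D1 by blast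
  finally have "norm (Phi_gradient \<eta> r \<theta>)
      \<ge> max 0 (softmax \<theta> astar * (r $ astar - exp_reward r \<theta>) - real CARD('n) / \<eta>)"
    by simp
  with gderiv_Phi show "\<exists>D. (GDERIV (Phi \<eta> r) \<theta> :> D) \<and>
      norm D \<ge> max 0 (softmax \<theta> astar * (r $ astar - exp_reward r \<theta>) - real CARD('n) / \<eta>)"
    by blast
qed

end
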